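(* Let $(S,K,I)$ be a split graph. If the factor graph $\Phi(S)$ is connected, then its diameter is at most $\lceil(\deg(S)+1)/2\rceil$.
   Context: A split graph $(S,K,I)$ is a graph $S$ together with a fixed partition $V(S)=K\dot\cup I$, where $K$ is a clique and $I$ is an independent set. For a vertex $v$ of $S$, $N_v$ denotes its open neighborhood in $S$ and $d_v=|N_v|$; $\eta_{uv}=|N_u\cap N_v|$. A 2-switch in $S$ replaces edges $ab,cd$ with $ac,bd$ when $ab,cd\in E(S)$ and $ac,bd\notin E(S)$. The factor graph $\Phi(S)$ is the loopless multigraph with vertex set $I$ in which, for distinct $u,v\in I$, there is one edge joining $u$ and $v$ for each 2-switch of $S$ acting on $u$ and $v$; equivalently, the multiplicity of $uv$ is $\sigma_{uv}=(d_u-\eta_{uv})(d_v-\eta_{uv})$. The 2-switch-degree $\deg(S)$ is the number of 2-switches acting on $S$, which equals the number of edges of $\Phi(S)$ counted with multiplicity, i.e. $\sum_{\{u,v\}\subseteq I}\sigma_{uv}$. Distances (and hence the diameter) in $\Phi(S)$ are measured ignoring edge multiplicities, i.e. as in the underlying simple graph. *)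

theory Defs
  imports Complex_Main
begin

definition split_graph :: "'a set \<Rightarrow> ('a \<Rightarrow> 'a \<Rightarrow> bool) \<Rightarrow> 'a set \<Rightarrow> 'a set \<Rightarrow> bool" where
  "split_graph V E K I \<longleftrightarrow>
     finite V \<and>
     (\<forall>u v. E u v \<longrightarrow> u \<in> V \<and> v \<in> V) \<and>
     (\<forall>u v. E u v \<longrightarrow> E v u) \<and>
     (\<forall>v. \<not> E v v) \<and>
     K \<union> I = V \<and> K \<inter> I = {} \<and>
     (\<forall>u\<in>K. \<forall>v\<in>K. u \<noteq> v \<longrightarrow> E u v) \<and>
     (\<forall>u\<in>I. \<forall>v\<in>I. \<not> E u v)"

definition nbhd :: "'a set \<Rightarrow> ('a \<Rightarrow> 'a \<Rightarrow> bool) \<Rightarrow> 'a \<Rightarrow> 'a set" where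
  "nbhd V E v = {w \<in> V. E v w}"

definition vdeg :: "'a set \<Rightarrow> ('a \<Rightarrow> 'a \<Rightarrow> bool) \<Rightarrow> 'a \<Rightarrow> nat" where
  "vdeg V E v = card (nbhd V E v)"

definition eta :: "'a set \<Rightarrow> ('a \<Rightarrow> 'a \<Rightarrow> bool) \<Rightarrow> 'a \<Rightarrow> 'a \<Rightarrow> nat" where
  "eta V E u v = card (nbhd V E u \<inter> nbhd V E v)"

text \<open>Multiplicity of the edge uv in the factor graph: sigma_uv = (d_u - eta_uv)(d_v - eta_uv).\<close>
definition sigma :: "'a set \<Rightarrow> ('a \<Rightarrow> 'a \<Rightarrow> bool) \<Rightarrow> 'a \<Rightarrow> 'a \<Rightarrow> nat" where
  "sigma V E u v = (vdeg V E u - eta V E u v) * (vdeg V E v - eta V E u v)"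

text \<open>2-switch-degree: sum of sigma over unordered pairs {u,v} of distinct vertices of I.
Since sigma is symmetric in u,v, this is half the sum over ordered pairs.\<close>
definition switch_deg :: "'a set \<Rightarrow> ('a \<Rightarrow> 'a \<Rightarrow> bool) \<Rightarrow> 'a set \<Rightarrow> nat" where
  "switch_deg V E I = (\<Sum>u\<in>I. \<Sum>v\<in>I. if u \<noteq> v then sigma V E u v else 0) div 2"

text \<open>Adjacency in the underlying simple graph of the factor graph Phi(S), on vertex set I.\<close>
definition factor_adj :: "'a set \<Rightarrow> ('a \<Rightarrow> 'a \<Rightarrow> bool) \<Rightarrow> 'a set \<Rightarrow> ('a \<times> 'a) set" where
  "factor_adj V E I = {(u, v). u \<in> I \<and> v \<in> I \<and> u \<noteq> v \<and> sigma V E u v > 0}"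

definition factor_connected :: "'a set \<Rightarrow> ('a \<Rightarrow> 'a \<Rightarrow> bool) \<Rightarrow> 'a set \<Rightarrow> bool" where
  "factor_connected V E I \<longleftrightarrow> (\<forall>u\<in>I. \<forall>v\<in>I. (u, v) \<in> (factor_adj V E I)\<^sup>*)"

definition factor_dist :: "'a set \<Rightarrow> ('a \<Rightarrow> 'a \<Rightarrow> bool) \<Rightarrow> 'a set \<Rightarrow> 'a \<Rightarrow> 'a \<Rightarrow> nat" where
  "factor_dist V E I u v = (LEAST n. (u, v) \<in> (factor_adj V E I) ^^ n)"

definition factor_diam :: "'a set \<Rightarrow> ('a \<Rightarrow> 'a \<Rightarrow> bool) \<Rightarrow> 'a set \<Rightarrow> nat" where
  "factor_diam V E I = Max (insert 0 {factor_dist V E I u v | u v. u \<in> I \<and> v \<in> I})"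

end

theory Submission
  imports Defs
begin

text \<open>Take a shortest path \<open>p\<^sub>0 \<dots> p\<^sub>D\<close> in \<open>\<Phi>(S)\<close>. Since \<open>\<sigma>\<^sub>u\<^sub>v > 0\<close> exactly when the
neighbourhoods of \<open>u\<close> and \<open>v\<close> are not nested, consecutive path vertices have non-nested
neighbourhoods while vertices two or more steps apart have nested ones. If an inner edge
\<open>p\<^sub>i p\<^sub>i\<^sub>+\<^sub>1\<close> had \<open>\<sigma> = 1\<close>, the two neighbourhoods would differ by exchanging a single vertex,
which is incompatible with the nestedness relations to \<open>p\<^sub>i\<^sub>-\<^sub>1\<close> and \<open>p\<^sub>i\<^sub>+\<^sub>2\<close>. Hence inner edges
have \<open>\<sigma> \<ge> 2\<close> and the two end edges \<open>\<sigma> \<ge> 1\<close>, so \<open>deg(S) \<ge> 2D - 2\<close>.\<close>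

definition nested :: "'a set \<Rightarrow> 'a set \<Rightarrow> bool" where
  "nested A B \<longleftrightarrow> A \<subseteq> B \<or> B \<subseteq> A"

lemma finite_nbhd: "finite V \<Longrightarrow> finite (nbhd V E v)"
  unfolding nbhd_def by simp

lemma sigma_eq_card_Diff:
  assumes "finite V"
  shows "sigma V E u v = card (nbhd V E u - nbhd V E v) * card (nbhd V E v - nbhd V E u)"
  using finite_nbhd[OF assms]
  by (simp add: sigma_def vdeg_def eta_def card_Diff_subset_Int Int_commute)

lemma sigma_commute: "sigma V E u v = sigma V E v u"
  unfolding sigma_def eta_def by (simp add: Int_commute)

lemma sigma_pos_iff_not_nested:
  assumes "finite V"
  shows "0 < sigma V E u v \<longleftrightarrow> \<not> nested (nbhd V E u) (nbhd V E v)"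
  using finite_nbhd[OF assms]
  by (auto simp: sigma_eq_card_Diff[OF assms] card_gt_0_iff nested_def)

lemma two_le_card_Diff_mult:
  assumes "finite B" "finite C"
    and AB: "\<not> nested A B" and BC: "\<not> nested B C" and CD: "\<not> nested C D"
    and AC: "nested A C" and BD: "nested B D" and AD: "nested A D"
  shows "2 \<le> card (B - C) * card (C - B)"
proof (rule ccontr)
  assume "\<not> ?thesis"
  moreover have "card (B - C) > 0" "card (C - B) > 0"
    using BC assms(1,2) unfolding nested_def by (auto simp: card_gt_0_iff)
  ultimately have "card (B - C) = 1 \<and> card (C - B) = 1"
    by (cases "card (B - C)"; cases "card (C - B)") auto
  then obtain a b where "B - C = {a}" and "C - B = {b}"
    by (auto simp: card_1_singleton_iff)
  then have a: "a \<in> B" "a \<notin> C" "\<And>x. x \<in> B \<Longrightarrow> x \<notin> C \<Longrightarrow> x = a"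
    and b: "b \<in> C" "b \<notin> B" "\<And>x. x \<in> C \<Longrightarrow> x \<notin> B \<Longrightarrow> x = b"
    by auto
  have "b \<in> A"
    using AC AB b unfolding nested_def by blast
  moreover have "a \<notin> A"
    using AC AB a unfolding nested_def by blast
  moreover have "a \<in> D"
    using BD CD a unfolding nested_def by blast
  moreover have "b \<notin> D"
    using BD CD b unfolding nested_def by blast
  ultimately show False
    using AD unfolding nested_def by blast
qed

lemma relpow_walk_segment:
  assumes "\<forall>k<n. (p k, p (Suc k)) \<in> R" "i \<le> j" "j \<le> n"
  shows "(p i, p j) \<in> R ^^ (j - i)"
  unfolding relpow_fun_conv
  by (rule exI[of _ "\<lambda>k. p (k + i)"]) (use assms in auto)

lemma shortest_walk_no_shortcut:
  assumes walk: "\<forall>k<D. (p k, p (Suc k)) \<in> R"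
    and shortest: "\<And>n. n < D \<Longrightarrow> (p 0, p D) \<notin> R ^^ n"
    and "i \<le> j" "j \<le> D" and shortcut: "(p i, p j) \<in> R ^^ k"
  shows "j - i \<le> k"
proof -
  have "(p 0, p i) \<in> R ^^ i" "(p j, p D) \<in> R ^^ (D - j)"
    using relpow_walk_segment[OF walk, of 0 i] relpow_walk_segment[OF walk, of j D] assms(3,4)
    by simp_all
  with shortcut have "(p 0, p D) \<in> R ^^ (i + k + (D - j))"
    unfolding relpow_add by blast
  then have "\<not> i + k + (D - j) < D"
    using shortest by blast
  then show ?thesis
    using assms(3,4) by linarith
qed

lemma factor_shortest_walk:
  fixes V I :: "'a set" and E :: "'a \<Rightarrow> 'a \<Rightarrow> bool" and u v :: 'a
  defines "D \<equiv> factor_dist V E I u v"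
  assumes "finite V" "v \<in> I" "(u, v) \<in> (factor_adj V E I)\<^sup>*"
  obtains p where "p 0 = u" "p D = v" "p ` {..D} \<subseteq> I" "inj_on p {..D}"
    "\<And>i. i < D \<Longrightarrow> 0 < sigma V E (p i) (p (Suc i))"
    "\<And>i j. i + 2 \<le> j \<Longrightarrow> j \<le> D \<Longrightarrow> nested (nbhd V E (p i)) (nbhd V E (p j))"
proof -
  let ?R = "factor_adj V E I"
  obtain m where "(u, v) \<in> ?R ^^ m"
    using assms(4) by (auto simp: rtrancl_power)
  then have "(u, v) \<in> ?R ^^ D"
    unfolding D_def factor_dist_def by (rule LeastI)
  then obtain p where p0: "p 0 = u" and pD: "p D = v" and walk: "\<forall>i<D. (p i, p (Suc i)) \<in> ?R"
    by (auto simp: relpow_fun_conv)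
  have shortest: "(p 0, p D) \<notin> ?R ^^ n" if "n < D" for n
    using not_less_Least[OF that[unfolded D_def factor_dist_def]] p0 pD D_def factor_dist_def by simp
  note no_shortcut = shortest_walk_no_shortcut[OF walk shortest]
  show thesis
  proof
    show "p ` {..D} \<subseteq> I"
      using walk pD assms(3) unfolding factor_adj_def by (auto simp: le_eq_less_or_eq)
    then have in_I: "p i \<in> I" if "i \<le> D" for i
      using that by auto
    show "inj_on p {..D}"
    proof (rule linorder_inj_onI)
      show "p i \<noteq> p j" if "i < j" "j \<in> {..D}" for i j
        using no_shortcut[of i j 0] that by auto
    qed auto
    show "0 < sigma V E (p i) (p (Suc i))" if "i < D" for i
      using walk that unfolding factor_adj_def by simp
    show "nested (nbhd V E (p i)) (nbhd V E (p j))" if "i + 2 \<le> j" "j \<le> D" for i j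
    proof -
      have "(p i, p j) \<notin> ?R"
        using no_shortcut[of i j 1] that by auto
      moreover have "p i \<noteq> p j"
        using no_shortcut[of i j 0] that by auto
      ultimately show ?thesis
        using in_I that
        by (auto simp: factor_adj_def sigma_pos_iff_not_nested[OF assms(2)])
    qed
  qed (use p0 pD in auto)
qed

lemma path_weight_le_pair_sum:
  fixes w :: "'a \<Rightarrow> 'a \<Rightarrow> nat"
  assumes "finite I" "p ` {..D} \<subseteq> I" "inj_on p {..D}" "\<And>x y. w x y = w y x"
  shows "2 * (\<Sum>i<D. w (p i) (p (Suc i))) \<le> (\<Sum>x\<in>I. \<Sum>y\<in>I. if x \<noteq> y then w x y else 0)"
proof -
  define f where "f = (\<lambda>(x, y). if x \<noteq> y then w x y else 0)"
  define fwd where "fwd = (\<lambda>i. (p i, p (Suc i))) ` {..<D}"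
  define bwd where "bwd = (\<lambda>i. (p (Suc i), p i)) ` {..<D}"
  have inj: "p i = p j \<longleftrightarrow> i = j" if "i \<le> D" "j \<le> D" for i j
    using assms(3) that by (auto dest: inj_onD)
  have "sum f fwd = (\<Sum>i<D. w (p i) (p (Suc i)))"
    unfolding fwd_def f_def
    by (subst sum.reindex) (auto intro!: inj_onI sum.cong simp: inj)
  moreover have "sum f bwd = (\<Sum>i<D. w (p i) (p (Suc i)))"
    unfolding bwd_def f_def
    by (subst sum.reindex) (auto intro!: inj_onI sum.cong simp: inj assms(4))
  moreover have "fwd \<inter> bwd = {}"
    unfolding fwd_def bwd_def by (auto simp: inj)
  moreover have "sum f (fwd \<union> bwd) \<le> sum f (I \<times> I)"
    using assms(1,2) by (intro sum_mono2) (auto simp: fwd_def bwd_def)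
  ultimately show ?thesis
    unfolding f_def by (simp add: sum.union_disjoint fwd_def bwd_def sum.cartesian_product)
qed

lemma double_le_sum_interior_twos:
  fixes s :: "nat \<Rightarrow> nat"
  assumes "\<And>i. i < D \<Longrightarrow> 1 \<le> s i" "\<And>i. 0 < i \<Longrightarrow> i + 2 \<le> D \<Longrightarrow> 2 \<le> s i"
  shows "2 * D \<le> (\<Sum>i<D. s i) + 2"
proof (cases "D = 0")
  case False
  have "2 * D = (\<Sum>i<D. 2::nat)"
    by simp
  also have "\<dots> \<le> (\<Sum>i<D. s i + (if i = 0 then 1 else 0) + (if i = D - 1 then 1 else 0))"
    using assms by (intro sum_mono) fastforce
  also have "\<dots> = (\<Sum>i<D. s i) + 2"
    using False by (simp add: sum.distrib)
  finally show ?thesis .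
qed simp

lemma factor_dist_bound:
  assumes "finite V" "I \<subseteq> V" "v \<in> I" "(u, v) \<in> (factor_adj V E I)\<^sup>*"
  shows "2 * factor_dist V E I u v \<le> switch_deg V E I + 2"
proof -
  define D where "D = factor_dist V E I u v"
  obtain p where "p ` {..D} \<subseteq> I" "inj_on p {..D}"
    and edge: "\<And>i. i < D \<Longrightarrow> 0 < sigma V E (p i) (p (Suc i))"
    and far: "\<And>i j. i + 2 \<le> j \<Longrightarrow> j \<le> D \<Longrightarrow> nested (nbhd V E (p i)) (nbhd V E (p j))"
    using factor_shortest_walk[OF assms(1,3,4)] unfolding D_def by metis
  define s where "s i = sigma V E (p i) (p (Suc i))" for i
  have adjacent: "\<not> nested (nbhd V E (p i)) (nbhd V E (p (Suc i)))" if "i < D" for i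
    using edge[OF that] by (simp add: sigma_pos_iff_not_nested[OF assms(1)])
  have "2 \<le> s i" if "0 < i" "i + 2 \<le> D" for i
  proof -
    obtain j where i: "i = Suc j"
      using \<open>0 < i\<close> gr0_implies_Suc by blast
    have "2 \<le> card (nbhd V E (p i) - nbhd V E (p (Suc i))) * card (nbhd V E (p (Suc i)) - nbhd V E (p i))"
      using that unfolding i
      by (intro two_le_card_Diff_mult[where A = "nbhd V E (p j)" and D = "nbhd V E (p (Suc (Suc (Suc j))))"]
          finite_nbhd[OF assms(1)] adjacent far) auto
    then show ?thesis
      unfolding s_def sigma_eq_card_Diff[OF assms(1)] .
  qed
  then have "2 * D \<le> (\<Sum>i<D. s i) + 2"
    using edge unfolding s_def by (intro double_le_sum_interior_twos) (auto simp: Suc_le_eq)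
  moreover have "2 * (\<Sum>i<D. s i) \<le> (\<Sum>x\<in>I. \<Sum>y\<in>I. if x \<noteq> y then sigma V E x y else 0)"
    unfolding s_def using assms(1,2) \<open>p ` {..D} \<subseteq> I\<close> \<open>inj_on p {..D}\<close>
    by (intro path_weight_le_pair_sum) (auto intro: finite_subset sigma_commute)
  ultimately show ?thesis
    unfolding D_def switch_deg_def by linarith
qed

lemma factor_diam_le:
  assumes "finite I" "\<And>u v. u \<in> I \<Longrightarrow> v \<in> I \<Longrightarrow> factor_dist V E I u v \<le> m"
  shows "factor_diam V E I \<le> m"
proof -
  have "{factor_dist V E I u v | u v. u \<in> I \<and> v \<in> I} = (\<lambda>(u, v). factor_dist V E I u v) ` (I \<times> I)"
    by auto
  then show ?thesis
    unfolding factor_diam_def using assms by (auto simp: Max_le_iff)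
qed

lemma ceiling_half_Suc: "\<lceil>(real n + 1) / 2\<rceil> = int ((n + 2) div 2)"
  by (cases "even n") (auto simp: ceiling_eq_iff elim!: evenE oddE)

theorem theorem4p7:
  fixes V K I :: "'a set" and E :: "'a \<Rightarrow> 'a \<Rightarrow> bool"
  assumes "split_graph V E K I"
    and "factor_connected V E I"
  shows "real (factor_diam V E I) \<le> real_of_int \<lceil>(real (switch_deg V E I) + 1) / 2\<rceil>"
proof -
  have "finite V" "I \<subseteq> V"
    using assms(1) unfolding split_graph_def by auto
  have "factor_dist V E I u v \<le> (switch_deg V E I + 2) div 2" if "u \<in> I" "v \<in> I" for u v
    using factor_dist_bound[OF \<open>finite V\<close> \<open>I \<subseteq> V\<close> \<open>v \<in> I\<close>] assms(2) that
    unfolding factor_connected_def by fastforce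
  then have "factor_diam V E I \<le> (switch_deg V E I + 2) div 2"
    using \<open>finite V\<close> \<open>I \<subseteq> V\<close> by (intro factor_diam_le) (auto intro: finite_subset)
  then show ?thesis
    by (simp add: ceiling_half_Suc)
qed

end
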